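(* For any hypergraph $\mathcal{H}=(V,E)$ (with $V=\bigcup_{e\in E}e$): (1) $\kappa(\mathcal{H})\ge \tau^*(\mathsf{red}(\mathcal{H}))$; (2) $\kappa(\mathcal{H})\ge \rho^*(\mathsf{red}(\mathcal{H}))=\rho^*(\mathcal{H})$; (3) $\kappa(\mathcal{H})\le \psi^*(\mathcal{H})$.
   Context: For $S\subseteq V$, $\mathcal{H}[S]$ is the hypergraph with vertex set $S$ and edge set $\{S\cap e : e\in E,\ S\cap e\neq\emptyset\}$. The reduced hypergraph $\mathsf{red}(\mathcal{H})$ has the same vertex set and is obtained by removing every edge $e$ for which there is another edge $e'\neq e$ with $e\subseteq e'$. $\tau^*(\mathcal{H})$ is the value of a maximum fractional edge packing (nonnegative edge weights with $\sum_{e\ni v}u_e\le1$ for every vertex $v$), equivalently of a minimum fractional vertex cover. $\rho^*(\mathcal{H})$ is the value of a minimum fractional edge cover (nonnegative edge weights with $\sum_{e\ni v}u_e\ge1$ for every vertex $v$). The reduced quasi vertex-cover is $\kappa(\mathcal{H})=\max_{S\subseteq V}\tau^*(\mathsf{red}(\mathcal{H}[S]))$, and the edge quasi-packing is $\psi^*(\mathcal{H})=\max_{S\subseteq V}\tau^*(\mathcal{H}[S])$. *)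

theory Defs
  imports Main "HOL.Real"
begin

type_synonym 'a hypergraph = "'a set \<times> 'a set set"

definition verts :: "'a hypergraph \<Rightarrow> 'a set" where "verts H = fst H"
definition edges :: "'a hypergraph \<Rightarrow> 'a set set" where "edges H = snd H"

definition induced :: "'a hypergraph \<Rightarrow> 'a set \<Rightarrow> 'a hypergraph" where
  "induced H S = (S, {S \<inter> e | e. e \<in> edges H \<and> S \<inter> e \<noteq> {}})"

definition red :: "'a hypergraph \<Rightarrow> 'a hypergraph" where
  "red H = (verts H, {e \<in> edges H. \<not> (\<exists>e'\<in>edges H. e' \<noteq> e \<and> e \<subseteq> e')})"

definition frac_packing :: "'a hypergraph \<Rightarrow> ('a set \<Rightarrow> real) \<Rightarrow> bool" where
  "frac_packing H u \<longleftrightarrow> (\<forall>e\<in>edges H. u e \<ge> 0) \<and>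
     (\<forall>v\<in>verts H. (\<Sum>e\<in>{e\<in>edges H. v \<in> e}. u e) \<le> 1)"

definition frac_edge_cover :: "'a hypergraph \<Rightarrow> ('a set \<Rightarrow> real) \<Rightarrow> bool" where
  "frac_edge_cover H u \<longleftrightarrow> (\<forall>e\<in>edges H. u e \<ge> 0) \<and>
     (\<forall>v\<in>verts H. (\<Sum>e\<in>{e\<in>edges H. v \<in> e}. u e) \<ge> 1)"

definition tau_star :: "'a hypergraph \<Rightarrow> real" where
  "tau_star H = Sup {(\<Sum>e\<in>edges H. u e) | u. frac_packing H u}"

definition rho_star :: "'a hypergraph \<Rightarrow> real" where
  "rho_star H = Inf {(\<Sum>e\<in>edges H. u e) | u. frac_edge_cover H u}"

definition kappa :: "'a hypergraph \<Rightarrow> real" where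
  "kappa H = Max ((\<lambda>S. tau_star (red (induced H S))) ` Pow (verts H))"

definition psi_star :: "'a hypergraph \<Rightarrow> real" where
  "psi_star H = Max ((\<lambda>S. tau_star (induced H S)) ` Pow (verts H))"

definition hypergraph :: "'a hypergraph \<Rightarrow> bool" where
  "hypergraph H \<longleftrightarrow> finite (verts H) \<and> {} \<notin> edges H \<and> verts H = \<Union>(edges H)"

end

theory Submission
  imports Defs
begin

text \<open>
  Parts (1) and (3) are monotonicity statements: \<open>H[V] = H\<close>, and deleting dominated edges can only
  shrink the set of fractional packings. For the equality in (2), a fractional edge cover of
  \<open>red(H)\<close> extends by zero to one of \<open>H\<close>, and a cover of \<open>H\<close> can be pushed onto maximal edges.

  The inequality \<open>\<kappa>(H) \<ge> \<rho>\<^sup>*(H)\<close> comes from LP duality: there are a fractional edge cover \<open>w\<close> and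
  a fractional vertex packing \<open>y\<close> (vertex weights with sum at most 1 on every edge) with
  \<open>\<Sum>w \<le> \<Sum>y\<close>. Let \<open>S\<close> be the support of \<open>y\<close>. By complementary slackness every edge \<open>e\<close> with
  \<open>w e > 0\<close> carries \<open>y\<close>-weight exactly 1, so its trace \<open>S \<inter> e\<close> cannot be strictly contained in
  another trace and is an edge of \<open>red(H[S])\<close>; and every vertex of \<open>S\<close> is covered by \<open>w\<close> exactly
  once. Hence moving each weight \<open>w e\<close> to the trace \<open>S \<inter> e\<close> gives a fractional packing of
  \<open>red(H[S])\<close> of value \<open>\<Sum>w \<ge> \<rho>\<^sup>*(H)\<close>. LP duality is derived from Farkas' lemma, which is proved
  by Fourier-Motzkin elimination.
\<close>

section \<open>Farkas' lemma\<close>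

inductive cone_comb :: "(('x \<Rightarrow> real) \<times> real) set \<Rightarrow> ('x \<Rightarrow> real) \<Rightarrow> real \<Rightarrow> bool"
  for C where
  zero: "cone_comb C (\<lambda>_. 0) 0"
| add: "cone_comb C a b \<Longrightarrow> (c, d) \<in> C \<Longrightarrow> 0 \<le> t \<Longrightarrow> cone_comb C (\<lambda>x. a x + t * c x) (b + t * d)"

lemma cone_comb_generator: "(c, d) \<in> C \<Longrightarrow> cone_comb C c d"
  using cone_comb.add[OF cone_comb.zero, of c d C 1] by simp

definition feasible :: "'x set \<Rightarrow> (('x \<Rightarrow> real) \<times> real) set \<Rightarrow> ('x \<Rightarrow> real) \<Rightarrow> bool" where
  "feasible X C z \<longleftrightarrow> (\<forall>(a, b)\<in>C. (\<Sum>x\<in>X. a x * z x) \<le> b)"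

fun fm_combine :: "'x \<Rightarrow> ('x \<Rightarrow> real) \<times> real \<Rightarrow> ('x \<Rightarrow> real) \<times> real \<Rightarrow> ('x \<Rightarrow> real) \<times> real" where
  "fm_combine x0 (a, b) (c, d) = (\<lambda>x. - c x0 * a x + a x0 * c x, - c x0 * b + a x0 * d)"

definition fm_eliminate :: "'x \<Rightarrow> (('x \<Rightarrow> real) \<times> real) set \<Rightarrow> (('x \<Rightarrow> real) \<times> real) set" where
  "fm_eliminate x0 C = {r \<in> C. fst r x0 = 0} \<union>
     (\<lambda>(p, n). fm_combine x0 p n) ` ({p \<in> C. 0 < fst p x0} \<times> {n \<in> C. fst n x0 < 0})"

lemma finite_fm_eliminate: "finite C \<Longrightarrow> finite (fm_eliminate x0 C)"
  by (simp add: fm_eliminate_def)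

lemma cone_comb_fm_eliminate:
  assumes "cone_comb (fm_eliminate x0 C) a b"
  shows "cone_comb C a b \<and> a x0 = 0"
  using assms
proof (induction rule: cone_comb.induct)
  case zero
  show ?case by (simp add: cone_comb.zero)
next
  case (add a b c d t)
  consider "(c, d) \<in> C" "c x0 = 0"
    | p q p' q' where "((p, q), (p', q')) \<in> {p \<in> C. 0 < fst p x0} \<times> {n \<in> C. fst n x0 < 0}"
        "(c, d) = fm_combine x0 (p, q) (p', q')"
    using add.hyps(2) by (auto simp: fm_eliminate_def)
  then show ?case
  proof cases
    case 1
    then show ?thesis using add cone_comb.add by fastforce
  next
    case 2
    then have c: "c = (\<lambda>x. - p' x0 * p x + p x0 * p' x)" and d: "d = - p' x0 * q + p x0 * q'"
      by simp_all
    have "cone_comb C (\<lambda>x. (a x + (t * - p' x0) * p x) + (t * p x0) * p' x)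
        ((b + (t * - p' x0) * q) + (t * p x0) * q')"
      using add 2 by (intro cone_comb.add) (auto intro: mult_nonneg_nonpos)
    then show ?thesis using add.IH by (simp add: c d algebra_simps)
  qed
qed

lemma exists_between_finite:
  fixes L U :: "real set"
  assumes "finite L" "finite U" "\<And>l u. l \<in> L \<Longrightarrow> u \<in> U \<Longrightarrow> l \<le> u"
  shows "\<exists>t. (\<forall>l\<in>L. l \<le> t) \<and> (\<forall>u\<in>U. t \<le> u)"
proof (cases "L = {}")
  case True
  then show ?thesis
    using assms by (intro exI[of _ "if U = {} then 0 else Min U"]) auto
next
  case False
  then show ?thesis
    using assms by (intro exI[of _ "Max L"]) auto
qed

lemma feasible_fm_eliminate_lift:
  assumes "finite X" "x0 \<notin> X" "finite C" "feasible X (fm_eliminate x0 C) z"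
  shows "\<exists>t. feasible (insert x0 X) C (z(x0 := t))"
proof -
  define slack where "slack = (\<lambda>(a, b). b - (\<Sum>x\<in>X. a x * z x))"
  define P where "P = {r \<in> C. 0 < fst r x0}"
  define N where "N = {r \<in> C. fst r x0 < 0}"
  \<comment> \<open>Every lower bound for the new coordinate lies below every upper bound, because the
    corresponding combination of the two rows belongs to the eliminated system.\<close>
  have separated: "slack n / fst n x0 \<le> slack p / fst p x0" if "p \<in> P" "n \<in> N" for p n
  proof -
    have "fm_combine x0 p n \<in> fm_eliminate x0 C"
      unfolding fm_eliminate_def using that by (auto simp: P_def N_def simp del: fm_combine.simps)
    moreover obtain a b c d where [simp]: "p = (a, b)" "n = (c, d)" by fastforce
    ultimately have "(\<Sum>x\<in>X. (- c x0 * a x + a x0 * c x) * z x) \<le> - c x0 * b + a x0 * d"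
      using assms(4) by (auto simp: feasible_def)
    moreover have "(\<Sum>x\<in>X. (- c x0 * a x + a x0 * c x) * z x)
        = - c x0 * (\<Sum>x\<in>X. a x * z x) + a x0 * (\<Sum>x\<in>X. c x * z x)"
      by (simp only: distrib_right sum.distrib sum_distrib_left mult.assoc)
    ultimately have "0 \<le> - c x0 * slack p + a x0 * slack n"
      by (simp add: slack_def algebra_simps)
    moreover have "0 < a x0" "c x0 < 0" using that by (auto simp: P_def N_def)
    ultimately show ?thesis by (simp add: divide_simps) (simp add: algebra_simps)
  qed
  have "finite P" "finite N" using assms(3) by (simp_all add: P_def N_def)
  then have "\<exists>t. (\<forall>l\<in>(\<lambda>n. slack n / fst n x0) ` N. l \<le> t) \<and> (\<forall>u\<in>(\<lambda>p. slack p / fst p x0) ` P. t \<le> u)"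
    using separated by (intro exists_between_finite) auto
  then obtain t where
    lower: "\<And>n. n \<in> N \<Longrightarrow> slack n / fst n x0 \<le> t" and
    upper: "\<And>p. p \<in> P \<Longrightarrow> t \<le> slack p / fst p x0"
    by auto
  have "(\<Sum>x\<in>insert x0 X. a x * (z(x0 := t)) x) \<le> b" if "(a, b) \<in> C" for a b
  proof -
    have "a x0 * t \<le> slack (a, b)"
    proof (cases "a x0" "0 :: real" rule: linorder_cases)
      case less
      then show ?thesis using lower[of "(a, b)"] that by (simp add: N_def divide_simps mult.commute)
    next
      case equal
      have "(a, b) \<in> fm_eliminate x0 C" using that equal by (simp add: fm_eliminate_def)
      then show ?thesis using assms(4) equal by (auto simp: feasible_def slack_def)
    next
      case greater
      then show ?thesis using upper[of "(a, b)"] that by (simp add: P_def divide_simps mult.commute)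
    qed
    moreover have "(\<Sum>x\<in>X. a x * (z(x0 := t)) x) = (\<Sum>x\<in>X. a x * z x)"
      using assms(2) by (intro sum.cong) auto
    ultimately show ?thesis using assms(1,2) by (simp add: slack_def)
  qed
  then show ?thesis by (auto simp: feasible_def)
qed

lemma farkas_cone:
  assumes "finite X" "finite C"
    and "\<And>a b. cone_comb C a b \<Longrightarrow> \<forall>x\<in>X. a x = 0 \<Longrightarrow> 0 \<le> b"
  shows "\<exists>z. feasible X C z"
  using assms
proof (induction X arbitrary: C rule: finite_induct)
  case empty
  then have "feasible {} C z" for z
    by (auto simp: feasible_def dest: cone_comb_generator)
  then show ?case by blast
next
  case (insert x0 X C)
  have "\<exists>z. feasible X (fm_eliminate x0 C) z"
  proof (rule insert.IH)
    show "finite (fm_eliminate x0 C)" using insert.prems(1) by (rule finite_fm_eliminate)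
    show "0 \<le> b" if "cone_comb (fm_eliminate x0 C) a b" "\<forall>x\<in>X. a x = 0" for a b
      using cone_comb_fm_eliminate[OF that(1)] that(2) insert.prems(2) by blast
  qed
  then show ?case
    using feasible_fm_eliminate_lift[OF insert.hyps insert.prems(1)] by blast
qed

lemma cone_comb_coeffs:
  assumes "cone_comb ((\<lambda>i. (a i, b i)) ` I) c d" "finite I"
  shows "\<exists>l. (\<forall>i\<in>I. 0 \<le> l i) \<and> (\<forall>x. c x = (\<Sum>i\<in>I. l i * a i x)) \<and> d = (\<Sum>i\<in>I. l i * b i)"
  using assms(1)
proof (induction rule: cone_comb.induct)
  case zero
  show ?case by (intro exI[of _ "\<lambda>_. 0"]) simp
next
  case (add c d c' d' t)
  obtain l where l: "\<forall>i\<in>I. 0 \<le> l i" "\<forall>x. c x = (\<Sum>i\<in>I. l i * a i x)" "d = (\<Sum>i\<in>I. l i * b i)"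
    using add.IH by blast
  obtain i0 where i0: "i0 \<in> I" "c' = a i0" "d' = b i0" using add.hyps(2) by auto
  define l' where "l' = (\<lambda>i. l i + of_bool (i = i0) * t)"
  have shift: "(\<Sum>i\<in>I. l' i * f i) = (\<Sum>i\<in>I. l i * f i) + t * f i0" for f
    using assms(2) i0(1) by (simp add: l'_def distrib_right sum.distrib mult.assoc Int_absorb1)
  show ?case
  proof (intro exI[of _ l'] conjI ballI allI)
    show "0 \<le> l' i" if "i \<in> I" for i
      using l(1) that add.hyps(3) by (simp add: l'_def)
  qed (use l i0 in \<open>simp_all add: shift\<close>)
qed

lemma farkas:
  fixes a :: "'i \<Rightarrow> 'x \<Rightarrow> real" and b :: "'i \<Rightarrow> real"
  assumes "finite X" "finite I"
    and "\<And>l. \<forall>i\<in>I. 0 \<le> l i \<Longrightarrow> \<forall>x\<in>X. (\<Sum>i\<in>I. l i * a i x) = 0 \<Longrightarrow> 0 \<le> (\<Sum>i\<in>I. l i * b i)"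
  shows "\<exists>z. \<forall>i\<in>I. (\<Sum>x\<in>X. a i x * z x) \<le> b i"
proof -
  have "\<exists>z. feasible X ((\<lambda>i. (a i, b i)) ` I) z"
  proof (rule farkas_cone)
    show "0 \<le> d" if "cone_comb ((\<lambda>i. (a i, b i)) ` I) c d" "\<forall>x\<in>X. c x = 0" for c d
      using cone_comb_coeffs[OF that(1) assms(2)] that(2) assms(3) by metis
  qed (use assms in auto)
  then show ?thesis by (auto simp: feasible_def)
qed

lemma farkas_nonneg:
  fixes a :: "'i \<Rightarrow> 'x \<Rightarrow> real" and b :: "'i \<Rightarrow> real"
  assumes "finite X" "finite I"
    and "\<And>l. \<forall>i\<in>I. 0 \<le> l i \<Longrightarrow> \<forall>x\<in>X. 0 \<le> (\<Sum>i\<in>I. l i * a i x) \<Longrightarrow> 0 \<le> (\<Sum>i\<in>I. l i * b i)"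
  shows "\<exists>z. (\<forall>x\<in>X. 0 \<le> z x) \<and> (\<forall>i\<in>I. (\<Sum>x\<in>X. a i x * z x) \<le> b i)"
proof -
  define a' where "a' = case_sum a (\<lambda>x x'. - of_bool (x' = x))"
  define b' where "b' = case_sum b (\<lambda>_ :: 'x. 0 :: real)"
  have "\<exists>z. \<forall>j\<in>I <+> X. (\<Sum>x\<in>X. a' j x * z x) \<le> b' j"
  proof (rule farkas)
    fix l assume l0: "\<forall>j\<in>I <+> X. 0 \<le> l j" and balanced: "\<forall>x\<in>X. (\<Sum>j\<in>I <+> X. l j * a' j x) = 0"
    have "(\<Sum>j\<in>I <+> X. l j * a' j x) = (\<Sum>i\<in>I. l (Inl i) * a i x) - l (Inr x)" if "x \<in> X" for x
      using assms(1,2) that by (simp add: sum.Plus a'_def sum_negf)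
    then have "\<forall>x\<in>X. 0 \<le> (\<Sum>i\<in>I. l (Inl i) * a i x)"
      using balanced l0 by force
    then have "0 \<le> (\<Sum>i\<in>I. l (Inl i) * b i)"
      using assms(3)[of "l \<circ> Inl"] l0 by auto
    then show "0 \<le> (\<Sum>j\<in>I <+> X. l j * b' j)"
      using assms(1,2) by (simp add: sum.Plus b'_def comp_def)
  qed (use assms in auto)
  then obtain z where z: "\<And>j. j \<in> I <+> X \<Longrightarrow> (\<Sum>x\<in>X. a' j x * z x) \<le> b' j"
    by blast
  have "0 \<le> z x" if "x \<in> X" for x
    using z[OF InrI[OF that]] that assms(1) by (simp add: a'_def b'_def sum_negf)
  moreover have "(\<Sum>x\<in>X. a i x * z x) \<le> b i" if "i \<in> I" for i
    using z[OF InlI[OF that]] by (simp add: a'_def b'_def)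
  ultimately show ?thesis by blast
qed

section \<open>Hypergraphs\<close>

lemma verts_induced [simp]: "verts (induced H S) = S"
  by (simp add: induced_def verts_def)

lemma edges_induced [simp]: "edges (induced H S) = {S \<inter> e |e. e \<in> edges H \<and> S \<inter> e \<noteq> {}}"
  by (simp add: induced_def edges_def)

lemma verts_red [simp]: "verts (red H) = verts H"
  by (simp add: red_def verts_def)

lemma edges_red: "edges (red H) = {e \<in> edges H. \<not> (\<exists>e'\<in>edges H. e' \<noteq> e \<and> e \<subseteq> e')}"
  by (simp add: red_def edges_def)

lemma edges_red_subset: "edges (red H) \<subseteq> edges H"
  by (auto simp: edges_red)

context
  fixes H :: "'a hypergraph"
  assumes H: "hypergraph H"
begin

lemma finite_verts: "finite (verts H)"
  using H hypergraph_def by blast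

lemma edge_subset_verts: "e \<in> edges H \<Longrightarrow> e \<subseteq> verts H"
  using H by (auto simp: hypergraph_def)

lemma edge_nonempty: "e \<in> edges H \<Longrightarrow> e \<noteq> {}"
  using H by (auto simp: hypergraph_def)

lemma finite_edges: "finite (edges H)"
  using finite_verts edge_subset_verts by (meson PowI finite_Pow_iff finite_subset subsetI)

lemma vertex_in_edge: "v \<in> verts H \<Longrightarrow> \<exists>e\<in>edges H. v \<in> e"
  using H by (auto simp: hypergraph_def)

lemma edge_subset_maximal_edge: "e \<in> edges H \<Longrightarrow> \<exists>m\<in>edges (red H). e \<subseteq> m"
  using finite_has_maximal2[OF finite_edges, of e] by (auto simp: edges_red)

lemma hypergraph_red: "hypergraph (red H)"
proof -
  have "verts H \<subseteq> \<Union>(edges (red H))"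
    using vertex_in_edge edge_subset_maximal_edge by blast
  moreover have "\<Union>(edges (red H)) \<subseteq> verts H"
    using edge_subset_verts edges_red_subset by blast
  ultimately show ?thesis
    using finite_verts edge_nonempty edges_red_subset[of H] by (auto simp: hypergraph_def)
qed

lemma hypergraph_induced:
  assumes "S \<subseteq> verts H"
  shows "hypergraph (induced H S)"
  unfolding hypergraph_def
proof (intro conjI)
  show "finite (verts (induced H S))"
    using assms finite_verts by (simp add: finite_subset)
  show "{} \<notin> edges (induced H S)"
    by auto
  show "verts (induced H S) = \<Union>(edges (induced H S))"
  proof
    show "verts (induced H S) \<subseteq> \<Union>(edges (induced H S))"
    proof
      fix v assume "v \<in> verts (induced H S)"
      then obtain e where "e \<in> edges H" "v \<in> e" "v \<in> S"
        using assms vertex_in_edge by auto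
      then have "S \<inter> e \<in> edges (induced H S)" "v \<in> S \<inter> e"
        by auto
      then show "v \<in> \<Union>(edges (induced H S))" by blast
    qed
  qed auto
qed

lemma induced_verts: "induced H (verts H) = H"
proof -
  have "{verts H \<inter> e |e. e \<in> edges H \<and> verts H \<inter> e \<noteq> {}} = edges H"
    using edge_subset_verts edge_nonempty by (force simp: Int_absorb1)
  then show ?thesis
    by (simp add: induced_def verts_def edges_def)
qed

end

lemma sum_fibers:
  assumes "finite E" "finite F"
  shows "(\<Sum>f\<in>F. \<Sum>e\<in>{e\<in>E. g e = f}. w e) = (\<Sum>e\<in>{e\<in>E. g e \<in> F}. w e)"
proof -
  have "(\<Sum>f\<in>F. \<Sum>e\<in>{e\<in>E. g e = f}. w e) = (\<Sum>f\<in>F. \<Sum>e\<in>{e\<in>{e\<in>E. g e \<in> F}. g e = f}. w e)"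
    by (rule sum.cong[OF refl], rule sum.cong) auto
  also have "\<dots> = (\<Sum>e\<in>{e\<in>E. g e \<in> F}. w e)"
    by (rule sum.group) (use assms in auto)
  finally show ?thesis .
qed

lemma frac_packing_le_one:
  assumes "hypergraph G" "frac_packing G u" "e \<in> edges G"
  shows "u e \<le> 1"
proof -
  obtain v where "v \<in> e" using edge_nonempty[OF assms(1,3)] by blast
  then have "v \<in> verts G" using edge_subset_verts[OF assms(1,3)] by blast
  have "u e \<le> (\<Sum>e'\<in>{e'\<in>edges G. v \<in> e'}. u e')"
    using assms \<open>v \<in> e\<close> finite_edges[OF assms(1)]
    by (intro member_le_sum) (auto simp: frac_packing_def)
  also have "\<dots> \<le> 1" using assms(2) \<open>v \<in> verts G\<close> by (simp add: frac_packing_def)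
  finally show ?thesis .
qed

lemma tau_star_upper:
  assumes "hypergraph G" "frac_packing G u"
  shows "(\<Sum>e\<in>edges G. u e) \<le> tau_star G"
  unfolding tau_star_def
proof (rule cSup_upper)
  have "(\<Sum>e\<in>edges G. u' e) \<le> real (card (edges G))" if "frac_packing G u'" for u'
    using sum_bounded_above[of "edges G" u' 1] frac_packing_le_one[OF assms(1) that] by simp
  then show "bdd_above {\<Sum>e\<in>edges G. u e |u. frac_packing G u}"
    by (auto intro!: bdd_aboveI[where M = "real (card (edges G))"])
qed (use assms(2) in blast)

lemma tau_star_least:
  assumes "\<And>u. frac_packing G u \<Longrightarrow> (\<Sum>e\<in>edges G. u e) \<le> c"
  shows "tau_star G \<le> c"
proof -
  have "frac_packing G (\<lambda>_. 0)" by (simp add: frac_packing_def)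
  then show ?thesis
    unfolding tau_star_def using assms by (intro cSup_least) auto
qed

lemma rho_star_lower:
  assumes "frac_edge_cover G u"
  shows "rho_star G \<le> (\<Sum>e\<in>edges G. u e)"
  unfolding rho_star_def
proof (rule cInf_lower)
  show "bdd_below {\<Sum>e\<in>edges G. u e |u. frac_edge_cover G u}"
    by (rule bdd_belowI[of _ 0]) (auto simp: frac_edge_cover_def intro: sum_nonneg)
qed (use assms in blast)

lemma frac_edge_cover_one:
  assumes "hypergraph G"
  shows "frac_edge_cover G (\<lambda>_. 1)"
  unfolding frac_edge_cover_def
proof (intro conjI ballI)
  fix v assume "v \<in> verts G"
  then have "{e \<in> edges G. v \<in> e} \<noteq> {}" using vertex_in_edge[OF assms] by blast
  then show "1 \<le> (\<Sum>e\<in>{e \<in> edges G. v \<in> e}. 1 :: real)"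
    using finite_edges[OF assms] by (simp add: Suc_le_eq card_gt_0_iff)
qed simp

lemma rho_star_greatest:
  assumes "hypergraph G" "\<And>u. frac_edge_cover G u \<Longrightarrow> c \<le> (\<Sum>e\<in>edges G. u e)"
  shows "c \<le> rho_star G"
  unfolding rho_star_def using frac_edge_cover_one[OF assms(1)] assms(2) by (intro cInf_greatest) auto

lemma sum_red_extend:
  assumes "finite (edges G)"
  shows "(\<Sum>e\<in>edges G. if e \<in> edges (red G) then u e else 0) = (\<Sum>e\<in>edges (red G). u e)"
    and "(\<Sum>e\<in>{e\<in>edges G. v \<in> e}. if e \<in> edges (red G) then u e else 0)
      = (\<Sum>e\<in>{e\<in>edges (red G). v \<in> e}. u e)"
  using assms edges_red_subset[of G]
  by (auto intro!: sum.mono_neutral_cong_right split: if_splits)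

lemma frac_packing_red_extend:
  assumes "finite (edges G)" "frac_packing (red G) u"
  shows "frac_packing G (\<lambda>e. if e \<in> edges (red G) then u e else 0)"
  using assms by (auto simp: frac_packing_def sum_red_extend)

lemma frac_edge_cover_red_extend:
  assumes "finite (edges G)" "frac_edge_cover (red G) u"
  shows "frac_edge_cover G (\<lambda>e. if e \<in> edges (red G) then u e else 0)"
  using assms by (auto simp: frac_edge_cover_def sum_red_extend)

lemma tau_star_red_le:
  assumes "hypergraph G"
  shows "tau_star (red G) \<le> tau_star G"
proof (rule tau_star_least)
  fix u assume "frac_packing (red G) u"
  then have "frac_packing G (\<lambda>e. if e \<in> edges (red G) then u e else 0)"
    using frac_packing_red_extend finite_edges[OF assms] by blast
  then have "(\<Sum>e\<in>edges G. if e \<in> edges (red G) then u e else 0) \<le> tau_star G"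
    by (rule tau_star_upper[OF assms])
  then show "(\<Sum>e\<in>edges (red G). u e) \<le> tau_star G"
    using sum_red_extend(1)[OF finite_edges[OF assms], of u] by simp
qed

lemma rho_star_le_red:
  assumes "hypergraph H"
  shows "rho_star H \<le> rho_star (red H)"
proof (rule rho_star_greatest[OF hypergraph_red[OF assms]])
  fix u assume "frac_edge_cover (red H) u"
  then have "frac_edge_cover H (\<lambda>e. if e \<in> edges (red H) then u e else 0)"
    using frac_edge_cover_red_extend finite_edges[OF assms] by blast
  then have "rho_star H \<le> (\<Sum>e\<in>edges H. if e \<in> edges (red H) then u e else 0)"
    by (rule rho_star_lower)
  then show "rho_star H \<le> (\<Sum>e\<in>edges (red H). u e)"
    using sum_red_extend(1)[OF finite_edges[OF assms], of u] by simp
qed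

lemma frac_edge_cover_push_to_red:
  assumes "hypergraph H" "frac_edge_cover H u"
  obtains u' where "frac_edge_cover (red H) u'" "(\<Sum>f\<in>edges (red H). u' f) = (\<Sum>e\<in>edges H. u e)"
proof -
  obtain m where m: "\<And>e. e \<in> edges H \<Longrightarrow> m e \<in> edges (red H) \<and> e \<subseteq> m e"
    using edge_subset_maximal_edge[OF assms(1)] by metis
  define u' where "u' = (\<lambda>f. \<Sum>e\<in>{e\<in>edges H. m e = f}. u e)"
  have fin: "finite (edges H)" "finite (edges (red H))"
    using assms(1) finite_edges hypergraph_red by blast+
  have u0: "0 \<le> u e" if "e \<in> edges H" for e
    using assms(2) that by (simp add: frac_edge_cover_def)
  have "frac_edge_cover (red H) u'"
    unfolding frac_edge_cover_def
  proof (intro conjI ballI)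
    show "0 \<le> u' f" for f
      unfolding u'_def using u0 by (intro sum_nonneg) auto
    fix v assume "v \<in> verts (red H)"
    then have "1 \<le> (\<Sum>e\<in>{e\<in>edges H. v \<in> e}. u e)"
      using assms(2) by (simp add: frac_edge_cover_def)
    also have "\<dots> \<le> (\<Sum>e\<in>{e\<in>edges H. m e \<in> {f\<in>edges (red H). v \<in> f}}. u e)"
      using fin m u0 by (intro sum_mono2) auto
    also have "\<dots> = (\<Sum>f\<in>{f\<in>edges (red H). v \<in> f}. u' f)"
      unfolding u'_def using fin by (simp add: sum_fibers)
    finally show "1 \<le> (\<Sum>f\<in>{f\<in>edges (red H). v \<in> f}. u' f)" .
  qed
  moreover have "{e\<in>edges H. m e \<in> edges (red H)} = edges H"
    using m by blast
  then have "(\<Sum>f\<in>edges (red H). u' f) = (\<Sum>e\<in>edges H. u e)"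
    unfolding u'_def using fin by (simp add: sum_fibers)
  ultimately show ?thesis using that by blast
qed

lemma rho_star_red:
  assumes "hypergraph H"
  shows "rho_star (red H) = rho_star H"
proof (rule antisym)
  show "rho_star (red H) \<le> rho_star H"
  proof (rule rho_star_greatest[OF assms])
    fix u assume "frac_edge_cover H u"
    then obtain u' where "frac_edge_cover (red H) u'" "(\<Sum>f\<in>edges (red H). u' f) = (\<Sum>e\<in>edges H. u e)"
      using frac_edge_cover_push_to_red assms by blast
    then show "rho_star (red H) \<le> (\<Sum>e\<in>edges H. u e)"
      using rho_star_lower by metis
  qed
qed (rule rho_star_le_red[OF assms])

section \<open>LP duality for fractional edge covers\<close>

definition frac_vertex_packing :: "'a hypergraph \<Rightarrow> ('a \<Rightarrow> real) \<Rightarrow> bool" where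
  "frac_vertex_packing H y \<longleftrightarrow> (\<forall>v\<in>verts H. 0 \<le> y v) \<and> (\<forall>e\<in>edges H. (\<Sum>v\<in>e. y v) \<le> 1)"

lemma double_counting:
  fixes w :: "'a set \<Rightarrow> real" and y :: "'a \<Rightarrow> real"
  assumes "hypergraph H"
  shows "(\<Sum>e\<in>edges H. w e * (\<Sum>v\<in>e. y v)) = (\<Sum>v\<in>verts H. y v * (\<Sum>e\<in>{e\<in>edges H. v \<in> e}. w e))"
proof -
  have "(\<Sum>e\<in>edges H. w e * (\<Sum>v\<in>e. y v)) = (\<Sum>e\<in>edges H. \<Sum>v\<in>{v\<in>verts H. v \<in> e}. w e * y v)"
  proof (rule sum.cong)
    fix e assume "e \<in> edges H"
    then have "{v\<in>verts H. v \<in> e} = e" using edge_subset_verts[OF assms] by blast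
    then show "w e * (\<Sum>v\<in>e. y v) = (\<Sum>v\<in>{v\<in>verts H. v \<in> e}. w e * y v)"
      by (simp add: sum_distrib_left)
  qed simp
  also have "\<dots> = (\<Sum>v\<in>verts H. \<Sum>e\<in>{e\<in>edges H. v \<in> e}. w e * y v)"
    using finite_edges[OF assms] finite_verts[OF assms] by (rule sum.swap_restrict)
  also have "\<dots> = (\<Sum>v\<in>verts H. y v * (\<Sum>e\<in>{e\<in>edges H. v \<in> e}. w e))"
    by (simp add: sum_distrib_left mult.commute)
  finally show ?thesis .
qed

lemma weak_duality_scaled:
  fixes w :: "'a set \<Rightarrow> real" and y :: "'a \<Rightarrow> real" and g :: real
  assumes "hypergraph H" "\<forall>v\<in>verts H. 0 \<le> y v" "\<forall>e\<in>edges H. 0 \<le> w e"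
    and packing: "\<forall>e\<in>edges H. (\<Sum>v\<in>e. y v) \<le> g"
    and cover: "\<forall>v\<in>verts H. g \<le> (\<Sum>e\<in>{e\<in>edges H. v \<in> e}. w e)"
  shows "(\<Sum>v\<in>verts H. y v) \<le> (\<Sum>e\<in>edges H. w e)"
proof (cases "0 < g")
  case True
  have "g * (\<Sum>v\<in>verts H. y v) = (\<Sum>v\<in>verts H. y v * g)"
    by (simp add: sum_distrib_left mult.commute)
  also have "\<dots> \<le> (\<Sum>v\<in>verts H. y v * (\<Sum>e\<in>{e\<in>edges H. v \<in> e}. w e))"
    using assms(2) cover by (intro sum_mono mult_left_mono) auto
  also have "\<dots> = (\<Sum>e\<in>edges H. w e * (\<Sum>v\<in>e. y v))"
    by (rule double_counting[OF assms(1), symmetric])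
  also have "\<dots> \<le> (\<Sum>e\<in>edges H. w e * g)"
    using assms(3) packing by (intro sum_mono mult_left_mono) auto
  also have "\<dots> = g * (\<Sum>e\<in>edges H. w e)"
    by (simp add: sum_distrib_left mult.commute)
  finally show ?thesis using True by simp
next
  case False
  have "y v = 0" if v: "v \<in> verts H" for v
  proof -
    obtain e where e: "e \<in> edges H" "v \<in> e" using vertex_in_edge[OF assms(1) v] by blast
    then have "finite e" "e \<subseteq> verts H"
      using edge_subset_verts[OF assms(1)] finite_verts[OF assms(1)] finite_subset by blast+
    then have "y v \<le> (\<Sum>v\<in>e. y v)"
      using assms(2) e by (intro member_le_sum) auto
    then show ?thesis using packing False assms(2) v e by force
  qed
  then show ?thesis using assms(3) by (simp add: sum_nonneg)
qed

lemma strong_duality: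
  assumes "hypergraph H"
  obtains w y where "frac_edge_cover H w" "frac_vertex_packing H y"
    "(\<Sum>e\<in>edges H. w e) \<le> (\<Sum>v\<in>verts H. y v)"
proof -
  let ?V = "verts H" and ?E = "edges H"
  let ?X = "?E <+> ?V" and ?I = "?V <+> ?E <+> (UNIV :: unit set)"
  \<comment> \<open>The variables are the edge weights \<open>w = z \<circ> Inl\<close> and the vertex weights \<open>y = z \<circ> Inr\<close>;
    the rows are the covering constraint of each vertex, the packing constraint of each edge,
    and the single constraint \<open>\<Sum>w - \<Sum>y \<le> 0\<close>.\<close>
  define a :: "'a + 'a set + unit \<Rightarrow> 'a set + 'a \<Rightarrow> real" where
    "a = case_sum (\<lambda>v. case_sum (\<lambda>e. - of_bool (v \<in> e)) (\<lambda>_. 0))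
           (case_sum (\<lambda>e. case_sum (\<lambda>_. 0) (\<lambda>v. of_bool (v \<in> e))) (\<lambda>_. case_sum (\<lambda>_. 1) (\<lambda>_. -1)))"
  define b :: "'a + 'a set + unit \<Rightarrow> real" where
    "b = case_sum (\<lambda>_. -1) (case_sum (\<lambda>_. 1) (\<lambda>_. 0))"
  have fin: "finite ?V" "finite ?E"
    using assms finite_verts finite_edges by blast+
  have edge_inter: "?V \<inter> e = e" if "e \<in> ?E" for e
    using edge_subset_verts[OF assms that] by blast
  have "\<exists>z. (\<forall>x\<in>?X. 0 \<le> z x) \<and> (\<forall>i\<in>?I. (\<Sum>x\<in>?X. a i x * z x) \<le> b i)"
  proof (rule farkas_nonneg)
    fix l assume l0: "\<forall>i\<in>?I. 0 \<le> l i" and dual: "\<forall>x\<in>?X. 0 \<le> (\<Sum>i\<in>?I. l i * a i x)"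
    have "(\<Sum>v\<in>e. l (Inl v)) \<le> l (Inr (Inr ()))" if "e \<in> ?E" for e
      using dual[rule_format, OF InlI[OF that]] fin edge_inter[OF that]
      by (simp add: a_def sum.Plus UNIV_unit sum_negf)
    moreover have "l (Inr (Inr ())) \<le> (\<Sum>e\<in>{e\<in>?E. v \<in> e}. l (Inr (Inl e)))" if "v \<in> ?V" for v
      using dual[rule_format, OF InrI[OF that]] fin
      by (simp add: a_def sum.Plus UNIV_unit Int_def conj_commute)
    ultimately have "(\<Sum>v\<in>?V. l (Inl v)) \<le> (\<Sum>e\<in>?E. l (Inr (Inl e)))"
      using l0 by (intro weak_duality_scaled[OF assms]) auto
    then show "0 \<le> (\<Sum>i\<in>?I. l i * b i)"
      using fin by (simp add: b_def sum.Plus UNIV_unit sum_negf)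
  qed (use fin in \<open>simp_all add: finite_Plus\<close>)
  then obtain z where z0: "\<forall>x\<in>?X. 0 \<le> z x"
    and rows: "\<forall>i\<in>?I. (\<Sum>x\<in>?X. a i x * z x) \<le> b i"
    by blast
  have "frac_edge_cover H (z \<circ> Inl)"
    unfolding frac_edge_cover_def
  proof (intro conjI ballI)
    show "0 \<le> (z \<circ> Inl) e" if "e \<in> ?E" for e
      using z0[rule_format, OF InlI[OF that]] by simp
    show "1 \<le> (\<Sum>e\<in>{e\<in>?E. v \<in> e}. (z \<circ> Inl) e)" if "v \<in> ?V" for v
      using rows[rule_format, OF InlI[OF that]] fin by (simp add: a_def b_def sum.Plus UNIV_unit sum_negf Int_def conj_commute)
  qed
  moreover have "frac_vertex_packing H (z \<circ> Inr)"
    unfolding frac_vertex_packing_def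
  proof (intro conjI ballI)
    show "0 \<le> (z \<circ> Inr) v" if "v \<in> ?V" for v
      using z0[rule_format, OF InrI[OF that]] by simp
    show "(\<Sum>v\<in>e. (z \<circ> Inr) v) \<le> 1" if "e \<in> ?E" for e
      using rows[rule_format, OF InrI[OF InlI[OF that]]] fin edge_inter[OF that] by (simp add: a_def b_def sum.Plus UNIV_unit)
  qed
  moreover have "(\<Sum>e\<in>?E. (z \<circ> Inl) e) \<le> (\<Sum>v\<in>?V. (z \<circ> Inr) v)"
    using rows[rule_format, OF InrI[OF InrI[OF UNIV_I]]] fin by (simp add: a_def b_def sum.Plus UNIV_unit sum_negf)
  ultimately show ?thesis using that by blast
qed

lemma complementary_slackness:
  assumes "hypergraph H" "frac_edge_cover H w" "frac_vertex_packing H y"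
    and "(\<Sum>e\<in>edges H. w e) \<le> (\<Sum>v\<in>verts H. y v)"
  shows "\<And>e. e \<in> edges H \<Longrightarrow> 0 < w e \<Longrightarrow> (\<Sum>v\<in>e. y v) = 1"
    and "\<And>v. v \<in> verts H \<Longrightarrow> 0 < y v \<Longrightarrow> (\<Sum>e\<in>{e\<in>edges H. v \<in> e}. w e) = 1"
proof -
  define P where "P e = (\<Sum>v\<in>e. y v)" for e
  define C where "C v = (\<Sum>e\<in>{e\<in>edges H. v \<in> e}. w e)" for v
  have edge_slack: "0 \<le> w e * (1 - P e)" if "e \<in> edges H" for e
    using assms(2,3) that by (simp add: frac_edge_cover_def frac_vertex_packing_def P_def)
  have vertex_slack: "0 \<le> y v * (C v - 1)" if "v \<in> verts H" for v
    using assms(2,3) that by (simp add: frac_edge_cover_def frac_vertex_packing_def C_def)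
  have "(\<Sum>e\<in>edges H. w e * (1 - P e)) + (\<Sum>v\<in>verts H. y v * (C v - 1))
      = (\<Sum>e\<in>edges H. w e) - (\<Sum>v\<in>verts H. y v)"
    using double_counting[OF assms(1), of w y]
    by (simp add: P_def C_def right_diff_distrib sum_subtractf)
  moreover have "0 \<le> (\<Sum>e\<in>edges H. w e * (1 - P e))" "0 \<le> (\<Sum>v\<in>verts H. y v * (C v - 1))"
    using edge_slack vertex_slack by (simp_all add: sum_nonneg)
  ultimately have "(\<Sum>e\<in>edges H. w e * (1 - P e)) = 0" "(\<Sum>v\<in>verts H. y v * (C v - 1)) = 0"
    using assms(4) by linarith+
  then have edge_tight: "\<forall>e\<in>edges H. w e * (1 - P e) = 0"
    and vertex_tight: "\<forall>v\<in>verts H. y v * (C v - 1) = 0"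
    using edge_slack vertex_slack finite_edges[OF assms(1)] finite_verts[OF assms(1)]
    by (simp_all add: sum_nonneg_eq_0_iff)
  show "(\<Sum>v\<in>e. y v) = 1" if "e \<in> edges H" "0 < w e" for e
    using edge_tight that by (auto simp: P_def)
  show "(\<Sum>e\<in>{e\<in>edges H. v \<in> e}. w e) = 1" if "v \<in> verts H" "0 < y v" for v
    using vertex_tight that by (auto simp: C_def)
qed

lemma support_trace_in_red:
  assumes "hypergraph H" "frac_vertex_packing H y" "e \<in> edges H" "(\<Sum>v\<in>e. y v) = 1"
  defines "S \<equiv> {v\<in>verts H. 0 < y v}"
  shows "S \<inter> e \<in> edges (red (induced H S))"
proof -
  have y0: "\<forall>v\<in>verts H. 0 \<le> y v" and packing: "\<forall>f\<in>edges H. (\<Sum>v\<in>f. y v) \<le> 1"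
    using assms(2) by (simp_all add: frac_vertex_packing_def)
  have trace_sum: "(\<Sum>v\<in>S \<inter> f. y v) = (\<Sum>v\<in>f. y v)" if "f \<in> edges H" for f
  proof (rule sum.mono_neutral_left)
    show "finite f"
      using that edge_subset_verts[OF assms(1)] finite_verts[OF assms(1)] finite_subset by blast
    show "\<forall>v\<in>f - S \<inter> f. y v = 0"
      using that edge_subset_verts[OF assms(1)] y0 by (force simp: S_def)
  qed auto
  have maximal: "\<not> S \<inter> e \<subset> S \<inter> f" if "f \<in> edges H" for f
  proof
    assume psub: "S \<inter> e \<subset> S \<inter> f"
    then obtain v where "v \<in> S \<inter> f - S \<inter> e" by blast
    have "1 = (\<Sum>v\<in>S \<inter> e. y v)" using trace_sum[OF assms(3)] assms(4) by simp
    also have "\<dots> < (\<Sum>v\<in>S \<inter> f. y v)"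
    proof (rule sum_strict_mono2)
      show "finite (S \<inter> f)"
        using finite_verts[OF assms(1)] by (simp add: S_def)
    qed (use psub \<open>v \<in> S \<inter> f - S \<inter> e\<close> in \<open>auto simp: S_def\<close>)
    also have "\<dots> \<le> 1" using trace_sum[OF that] packing that by simp
    finally show False by simp
  qed
  have "S \<inter> e \<noteq> {}"
    using trace_sum[OF assms(3)] assms(4) by force
  then show ?thesis
    using assms(3) maximal by (auto simp: edges_red)
qed

lemma tau_star_red_support:
  assumes "hypergraph H" "frac_edge_cover H w" "frac_vertex_packing H y"
    and "(\<Sum>e\<in>edges H. w e) \<le> (\<Sum>v\<in>verts H. y v)"
  defines "S \<equiv> {v\<in>verts H. 0 < y v}"
  shows "(\<Sum>e\<in>edges H. w e) \<le> tau_star (red (induced H S))"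
proof -
  define R where "R = edges (red (induced H S))"
  define u where "u f = (\<Sum>e\<in>{e\<in>edges H. S \<inter> e = f}. w e)" for f
  have G: "hypergraph (red (induced H S))"
    using assms(1) by (intro hypergraph_red hypergraph_induced) (auto simp: S_def)
  have fin: "finite (edges H)" "finite R"
    unfolding R_def using finite_edges[OF assms(1)] finite_edges[OF G] .
  have w0: "\<forall>e\<in>edges H. 0 \<le> w e"
    using assms(2) by (simp add: frac_edge_cover_def)
  have "frac_packing (red (induced H S)) u"
    unfolding frac_packing_def
  proof (intro conjI ballI)
    show "0 \<le> u f" for f
      unfolding u_def using w0 by (intro sum_nonneg) auto
    fix v assume "v \<in> verts (red (induced H S))"
    then have v: "v \<in> verts H" "0 < y v" by (simp_all add: S_def)
    have "(\<Sum>f\<in>{f\<in>R. v \<in> f}. u f) = (\<Sum>e\<in>{e\<in>edges H. S \<inter> e \<in> {f\<in>R. v \<in> f}}. w e)"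
      unfolding u_def using fin by (simp add: sum_fibers)
    also have "\<dots> \<le> (\<Sum>e\<in>{e\<in>edges H. v \<in> e}. w e)"
      using fin w0 by (intro sum_mono2) auto
    also have "\<dots> = 1"
      using complementary_slackness(2)[OF assms(1-4) v] .
    finally show "(\<Sum>f\<in>{f\<in>edges (red (induced H S)). v \<in> f}. u f) \<le> 1"
      by (simp add: R_def)
  qed
  then have "(\<Sum>f\<in>R. u f) \<le> tau_star (red (induced H S))"
    unfolding R_def by (rule tau_star_upper[OF G])
  moreover have "S \<inter> e \<in> R" if "e \<in> edges H" "0 < w e" for e
    using support_trace_in_red[OF assms(1,3) that(1)] complementary_slackness(1)[OF assms(1-4) that]
    by (simp add: R_def S_def)
  then have "(\<Sum>e\<in>{e\<in>edges H. S \<inter> e \<in> R}. w e) = (\<Sum>e\<in>edges H. w e)"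
    using fin w0 by (intro sum.mono_neutral_left) force+
  then have "(\<Sum>f\<in>R. u f) = (\<Sum>e\<in>edges H. w e)"
    unfolding u_def using fin by (simp add: sum_fibers)
  ultimately show ?thesis by simp
qed

section \<open>The reduced quasi vertex-cover\<close>

lemma tau_star_le_kappa:
  assumes "hypergraph H" "S \<subseteq> verts H"
  shows "tau_star (red (induced H S)) \<le> kappa H"
  unfolding kappa_def using assms finite_verts[OF assms(1)] by (intro Max_ge) auto

lemma kappa_le_psi_star:
  assumes "hypergraph H"
  shows "kappa H \<le> psi_star H"
  unfolding kappa_def
proof (rule Max.boundedI)
  show "finite ((\<lambda>S. tau_star (red (induced H S))) ` Pow (verts H))"
    using finite_verts[OF assms] by simp
  fix t assume "t \<in> (\<lambda>S. tau_star (red (induced H S))) ` Pow (verts H)"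
  then obtain S where S: "S \<subseteq> verts H" "t = tau_star (red (induced H S))" by blast
  then have "t \<le> tau_star (induced H S)"
    using tau_star_red_le[OF hypergraph_induced[OF assms S(1)]] by simp
  also have "\<dots> \<le> psi_star H"
    unfolding psi_star_def using S finite_verts[OF assms] by (intro Max_ge) auto
  finally show "t \<le> psi_star H" .
qed blast

theorem lemma3p6:
  fixes H :: "'a hypergraph"
  assumes "hypergraph H"
  shows "kappa H \<ge> tau_star (red H) \<and>
         (kappa H \<ge> rho_star (red H) \<and> rho_star (red H) = rho_star H) \<and>
         kappa H \<le> psi_star H"
proof -
  have "tau_star (red H) \<le> kappa H"
    using tau_star_le_kappa[OF assms order_refl] by (simp add: induced_verts[OF assms])
  moreover obtain w y where wy: "frac_edge_cover H w" "frac_vertex_packing H y"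
    "(\<Sum>e\<in>edges H. w e) \<le> (\<Sum>v\<in>verts H. y v)"
    using strong_duality[OF assms] .
  have "rho_star H \<le> kappa H"
    using rho_star_lower[OF wy(1)] tau_star_red_support[OF assms wy]
      tau_star_le_kappa[OF assms, of "{v\<in>verts H. 0 < y v}"] by fastforce
  moreover have "rho_star (red H) = rho_star H"
    by (rule rho_star_red[OF assms])
  moreover have "kappa H \<le> psi_star H"
    by (rule kappa_le_psi_star[OF assms])
  ultimately show ?thesis by simp
qed

end
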